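(* Let $G$ be a compact Hausdorff group in which every element has a countable Engel sink, and suppose $G$ has an abelian closed normal subgroup $A$ such that $G/A$ is locally nilpotent. Then every element of $G$ has a finite Engel sink.
   Context: Commutators are left-normed, $[a,b]=a^{-1}b^{-1}ab$, and $[x,{}_n g]=[x,g,\dots,g]$ with $g$ repeated $n$ times. An Engel sink of an element $g$ of a group $G$ is a set $\mathscr E(g)\subseteq G$ such that for every $x\in G$ there is a positive integer $n(x,g)$ with $[x,{}_n g]\in\mathscr E(g)$ for all $n\ge n(x,g)$. "Countable" means finite or denumerable. A group is locally nilpotent if every finitely generated subgroup is nilpotent. *)

theory Defs
  imports "HOL-Analysis.Analysis" "HOL-Algebra.Algebra" "HOL-Library.Countable_Set"
begin

definition gcomm :: "('a, 'b) monoid_scheme \<Rightarrow> 'a \<Rightarrow> 'a \<Rightarrow> 'a" where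
  "gcomm G a b = inv\<^bsub>G\<^esub> a \<otimes>\<^bsub>G\<^esub> inv\<^bsub>G\<^esub> b \<otimes>\<^bsub>G\<^esub> a \<otimes>\<^bsub>G\<^esub> b"

primrec engel_comm :: "('a, 'b) monoid_scheme \<Rightarrow> 'a \<Rightarrow> 'a \<Rightarrow> nat \<Rightarrow> 'a" where
  "engel_comm G x g 0 = x"
| "engel_comm G x g (Suc n) = gcomm G (engel_comm G x g n) g"

definition engel_sink :: "('a, 'b) monoid_scheme \<Rightarrow> 'a \<Rightarrow> 'a set \<Rightarrow> bool" where
  "engel_sink G g E \<longleftrightarrow> E \<subseteq> carrier G \<and>
     (\<forall>x\<in>carrier G. \<exists>n0>0. \<forall>n\<ge>n0. engel_comm G x g n \<in> E)"

primrec lower_central :: "('a, 'b) monoid_scheme \<Rightarrow> nat \<Rightarrow> 'a set" where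
  "lower_central G 0 = carrier G"
| "lower_central G (Suc n) =
     generate G {gcomm G a b | a b. a \<in> lower_central G n \<and> b \<in> carrier G}"

definition nilpotent_group :: "('a, 'b) monoid_scheme \<Rightarrow> bool" where
  "nilpotent_group G \<longleftrightarrow> group G \<and> (\<exists>c. lower_central G c = {\<one>\<^bsub>G\<^esub>})"

definition locally_nilpotent_group :: "('a, 'b) monoid_scheme \<Rightarrow> bool" where
  "locally_nilpotent_group G \<longleftrightarrow> group G \<and>
     (\<forall>S. S \<subseteq> carrier G \<and> finite S \<longrightarrow> nilpotent_group (subgroup_generated G S))"

definition compact_hausdorff_group :: "('a, 'b) monoid_scheme \<Rightarrow> 'a topology \<Rightarrow> bool" where
  "compact_hausdorff_group G T \<longleftrightarrow> group G \<and> topspace T = carrier G \<and>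
     continuous_map (prod_topology T T) T (\<lambda>(x, y). x \<otimes>\<^bsub>G\<^esub> y) \<and>
     continuous_map T T (\<lambda>x. inv\<^bsub>G\<^esub> x) \<and>
     compact_space T \<and> Hausdorff_space T"

end

theory Submission
  imports Defs
begin

text \<open>On the closed abelian normal subgroup \<open>A\<close> the maps \<open>a \<mapsto> [a, n g]\<close> are continuous
  endomorphisms, and the countable Engel sink of \<open>g\<close> makes \<open>A\<close> a countable union of their
  closed fibres. By the Baire category theorem some fibre of some \<open>a \<mapsto> [a, N g]\<close> has interior,
  so this endomorphism is constant on a nonempty open set and, \<open>A\<close> being compact, has finite
  image. Since \<open>G/A\<close> is locally nilpotent, hence Engel, every sequence \<open>[x, n g]\<close> enters \<open>A\<close>,
  so all of its terms from some point on lie in that finite image.\<close>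

lemma (in group) gcomm_closed [simp]:
  "a \<in> carrier G \<Longrightarrow> b \<in> carrier G \<Longrightarrow> gcomm G a b \<in> carrier G"
  by (simp add: gcomm_def)

lemma (in group) engel_comm_closed [simp]:
  "x \<in> carrier G \<Longrightarrow> g \<in> carrier G \<Longrightarrow> engel_comm G x g n \<in> carrier G"
  by (induction n) simp_all

lemma engel_comm_add: "engel_comm G x g (m + n) = engel_comm G (engel_comm G x g m) g n"
  by (induction n) simp_all

lemma (in group_hom) hom_gcomm:
  "x \<in> carrier G \<Longrightarrow> g \<in> carrier G \<Longrightarrow> h (gcomm G x g) = gcomm H (h x) (h g)"
  by (simp add: gcomm_def)

lemma (in group_hom) hom_engel_comm:
  "x \<in> carrier G \<Longrightarrow> g \<in> carrier G \<Longrightarrow> h (engel_comm G x g n) = engel_comm H (h x) (h g) n"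
  by (induction n) (simp_all add: hom_gcomm)

lemma (in group) engel_comm_in_lower_central:
  "x \<in> carrier G \<Longrightarrow> g \<in> carrier G \<Longrightarrow> engel_comm G x g n \<in> lower_central G n"
  by (induction n) (auto intro!: generate.incl)

lemma (in group) gcomm_subgroup_generated:
  assumes "a \<in> carrier (subgroup_generated G S)" "b \<in> carrier (subgroup_generated G S)"
  shows "gcomm (subgroup_generated G S) a b = gcomm G a b"
  using assms by (simp add: gcomm_def)

lemma (in group) engel_comm_subgroup_generated:
  assumes "x \<in> carrier (subgroup_generated G S)" "g \<in> carrier (subgroup_generated G S)"
  shows "engel_comm (subgroup_generated G S) x g n = engel_comm G x g n"
proof (induction n)
  case (Suc n)
  have "engel_comm (subgroup_generated G S) x g n \<in> carrier (subgroup_generated G S)"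
    using group.engel_comm_closed[OF group_subgroup_generated] assms .
  with Suc assms(2) show ?case by (simp add: gcomm_subgroup_generated)
qed simp

lemma (in group) locally_nilpotent_engel:
  assumes "locally_nilpotent_group G" "x \<in> carrier G" "g \<in> carrier G"
  shows "\<exists>c. engel_comm G x g c = \<one>"
proof -
  let ?K = "subgroup_generated G {x, g}"
  have "{x, g} \<subseteq> carrier G" using assms(2,3) by simp
  then have "nilpotent_group ?K"
    using assms(1) unfolding locally_nilpotent_group_def by blast
  then obtain c where c: "lower_central ?K c = {\<one>\<^bsub>?K\<^esub>}"
    unfolding nilpotent_group_def by blast
  have xg: "x \<in> carrier ?K" "g \<in> carrier ?K"
    using assms(2,3) unfolding carrier_subgroup_generated by (simp_all add: generate.incl)
  have "engel_comm ?K x g c \<in> lower_central ?K c"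
    using group.engel_comm_in_lower_central[OF group_subgroup_generated xg] .
  with c have "engel_comm G x g c = \<one>\<^bsub>?K\<^esub>"
    by (simp add: engel_comm_subgroup_generated[OF xg])
  then show ?thesis by auto
qed

lemma (in normal) engel_comm_in_if_locally_nilpotent_Mod:
  assumes "locally_nilpotent_group (G Mod H)" "x \<in> carrier G" "g \<in> carrier G"
  shows "\<exists>c. engel_comm G x g c \<in> H"
proof -
  interpret Mod: group_hom G "G Mod H" "\<lambda>a. H #> a"
    by (simp add: group_hom_def group_hom_axioms_def factorgroup_is_group r_coset_hom_Mod)
  have "H #> x \<in> carrier (G Mod H)" "H #> g \<in> carrier (G Mod H)"
    using assms(2,3) by simp_all
  then obtain c where "engel_comm (G Mod H) (H #> x) (H #> g) c = \<one>\<^bsub>G Mod H\<^esub>"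
    using Mod.H.locally_nilpotent_engel[OF assms(1)] by blast
  then have "H #> engel_comm G x g c = H"
    using assms(2,3) by (simp add: Mod.hom_engel_comm)
  then have "engel_comm G x g c \<in> H"
    using assms(2,3) coset_join1 is_subgroup by simp
  then show ?thesis ..
qed

lemma (in normal) gcomm_in:
  assumes "a \<in> H" "g \<in> carrier G"
  shows "gcomm G a g \<in> H"
proof -
  have "gcomm G a g = inv a \<otimes> (inv g \<otimes> a \<otimes> g)"
    using assms by (simp add: gcomm_def m_assoc)
  then show ?thesis
    using assms inv_op_closed1 by (simp add: subgroup.m_closed subgroup.m_inv_closed)
qed

lemma (in normal) engel_comm_in: "a \<in> H \<Longrightarrow> g \<in> carrier G \<Longrightarrow> engel_comm G a g n \<in> H"
  by (induction n) (simp_all add: gcomm_in)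

lemma (in normal) gcomm_mult_left:
  assumes comm: "\<And>a b. a \<in> H \<Longrightarrow> b \<in> H \<Longrightarrow> a \<otimes> b = b \<otimes> a"
    and a: "a \<in> H" and b: "b \<in> H" and g: "g \<in> carrier G"
  shows "gcomm G (a \<otimes> b) g = gcomm G a g \<otimes> gcomm G b g"
proof -
  define a' where "a' = inv g \<otimes> a \<otimes> g"
  define b' where "b' = inv g \<otimes> b \<otimes> g"
  have H: "a' \<in> H" "b' \<in> H" "inv a \<in> H" "inv b \<in> H"
    using a b g inv_op_closed1 by (simp_all add: a'_def b'_def subgroup.m_inv_closed)
  then have G: "a \<in> carrier G" "b \<in> carrier G" "a' \<in> carrier G" "b' \<in> carrier G"
    "inv a \<in> carrier G" "inv b \<in> carrier G"
    using a b subset by auto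
  have "gcomm G (a \<otimes> b) g = inv b \<otimes> inv a \<otimes> (a' \<otimes> b')"
    using g G by (simp add: gcomm_def a'_def b'_def m_assoc inv_mult_group flip: m_assoc[of g])
  also have "\<dots> = inv a \<otimes> (inv b \<otimes> a') \<otimes> b'"
    using comm[OF H(4,3)] G by (simp add: m_assoc)
  also have "\<dots> = inv a \<otimes> a' \<otimes> (inv b \<otimes> b')"
    using comm[OF H(4,1)] G by (simp add: m_assoc)
  also have "\<dots> = gcomm G a g \<otimes> gcomm G b g"
    using g G by (simp add: gcomm_def a'_def b'_def m_assoc)
  finally show ?thesis .
qed

lemma (in normal) engel_comm_mult_left:
  assumes "\<And>a b. a \<in> H \<Longrightarrow> b \<in> H \<Longrightarrow> a \<otimes> b = b \<otimes> a"
    and "a \<in> H" "b \<in> H" "g \<in> carrier G"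
  shows "engel_comm G (a \<otimes> b) g n = engel_comm G a g n \<otimes> engel_comm G b g n"
  using assms by (induction n) (simp_all add: gcomm_mult_left engel_comm_in)

lemma continuous_map_binop:
  assumes "continuous_map (prod_topology T T) T (\<lambda>(x, y). m x y)"
    and "continuous_map S T f" "continuous_map S T h"
  shows "continuous_map S T (\<lambda>x. m (f x) (h x))"
  using continuous_map_compose[OF continuous_map_pairedI[OF assms(2,3)] assms(1)]
  by (simp add: o_def)

lemma continuous_map_engel_comm:
  fixes G (structure)
  assumes mult: "continuous_map (prod_topology T T) T (\<lambda>(x, y). x \<otimes>\<^bsub>G\<^esub> y)"
    and inv: "continuous_map T T (\<lambda>x. inv\<^bsub>G\<^esub> x)"
    and g: "g \<in> topspace T"
  shows "continuous_map T T (\<lambda>x. engel_comm G x g n)"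
proof (induction n)
  case (Suc n)
  have "continuous_map T T (\<lambda>x. inv\<^bsub>G\<^esub> (engel_comm G x g n))"
    using continuous_map_compose[OF Suc inv] by (simp add: o_def)
  moreover have "continuous_map T T (\<lambda>x. inv\<^bsub>G\<^esub> g)"
    using continuous_map_compose[OF _ inv, of T "\<lambda>x. g"] g by (simp add: o_def)
  ultimately show ?case
    using g unfolding engel_comm.simps gcomm_def
    by (intro continuous_map_binop[OF mult] Suc) simp_all
qed simp

lemma compact_Hausdorff_countable_closed_cover:
  assumes "compact_space S" "Hausdorff_space S" "topspace S \<noteq> {}"
    and "countable \<C>" "\<And>C. C \<in> \<C> \<Longrightarrow> closedin S C" "\<Union>\<C> = topspace S"
  shows "\<exists>C\<in>\<C>. S interior_of C \<noteq> {}"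
proof (rule ccontr)
  assume "\<not> ?thesis"
  then have "S interior_of \<Union>\<C> = {}"
    using assms by (intro Baire_category_alt)
      (simp_all add: compact_imp_locally_compact_space compact_Hausdorff_imp_regular_space)
  then show False
    using assms(3,6) by simp
qed

lemma (in group) multiplicative_on_subgroup_one:
  assumes "f \<in> K \<rightarrow> carrier G" "\<And>a b. a \<in> K \<Longrightarrow> b \<in> K \<Longrightarrow> f (a \<otimes> b) = f a \<otimes> f b"
    and "subgroup K G"
  shows "f \<one> = \<one>"
proof -
  have "\<one> \<in> K" using assms(3) by (rule subgroup.one_closed)
  then have "f \<one> \<otimes> f \<one> = f \<one>" "f \<one> \<in> carrier G"
    using assms(1) assms(2)[of \<one> \<one>] by auto
  then show ?thesis by simp
qed

text \<open>The translates \<open>b a0\<inverse> V\<close> (\<open>b \<in> K\<close>) cover \<open>K\<close>, and \<open>f\<close> takes the single value \<open>f b\<close> on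
  \<open>b a0\<inverse> V\<close>; compactness leaves finitely many translates.\<close>
lemma (in group) finite_image_if_constant_on_open:
  assumes mult: "continuous_map (prod_topology T T) T (\<lambda>(x, y). x \<otimes> y)"
    and K: "subgroup K G" "compactin T K"
    and f: "f \<in> K \<rightarrow> carrier G" "\<And>a b. a \<in> K \<Longrightarrow> b \<in> K \<Longrightarrow> f (a \<otimes> b) = f a \<otimes> f b"
    and V: "openin (subtopology T K) V" "a0 \<in> V" "\<And>v. v \<in> V \<Longrightarrow> f v = f a0"
  shows "finite (f ` K)"
proof -
  obtain W where W: "openin T W" "V = W \<inter> K"
    using V(1) by (auto simp: openin_subtopology)
  have KT: "K \<subseteq> topspace T" using K(2) by (rule compactin_subset_topspace)
  have KG: "\<And>x. x \<in> K \<Longrightarrow> x \<in> carrier G" using K(1) subgroup.subset by blast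
  have a0: "a0 \<in> K" "a0 \<in> carrier G" using V(2) W(2) KG by auto
  define U where "U b = {x \<in> topspace T. a0 \<otimes> inv b \<otimes> x \<in> W}" for b
  have "openin T (U b)" if "b \<in> K" for b
  proof -
    have "a0 \<otimes> inv b \<in> topspace T"
      using that a0 K(1) KT by (auto intro: subgroup.m_closed subgroup.m_inv_closed)
    then have "continuous_map T T (\<lambda>x. a0 \<otimes> inv b \<otimes> x)"
      using continuous_map_binop[OF mult, of T "\<lambda>x. a0 \<otimes> inv b" "\<lambda>x. x"] by simp
    then show ?thesis
      unfolding U_def using W(1) by (rule openin_continuous_map_preimage)
  qed
  moreover have "K \<subseteq> \<Union>(U ` K)"
  proof
    fix b assume "b \<in> K"
    then have "b \<in> U b" using KT a0 KG W by (auto simp: U_def m_assoc V(2))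
    with \<open>b \<in> K\<close> show "b \<in> \<Union>(U ` K)" by blast
  qed
  ultimately obtain \<F> where "finite \<F>" "\<F> \<subseteq> U ` K" "K \<subseteq> \<Union>\<F>"
    using compactinD[OF K(2), of "U ` K"] by blast
  then obtain B where B: "B \<subseteq> K" "finite B" "K \<subseteq> \<Union>(U ` B)"
    by (metis finite_subset_image)
  have "f ` K \<subseteq> f ` B"
  proof
    fix y assume "y \<in> f ` K"
    then obtain x where x: "x \<in> K" "y = f x" by blast
    then obtain b where b: "b \<in> B" "x \<in> U b" using B(3) by blast
    define v where "v = a0 \<otimes> inv b \<otimes> x"
    have "b \<in> K" using b(1) B(1) by blast
    then have "v \<in> V" "inv a0 \<in> K"
      using b(2) x(1) a0 W(2) K(1)
      by (auto simp: U_def v_def intro: subgroup.m_closed subgroup.m_inv_closed)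
    have "x = b \<otimes> (inv a0 \<otimes> v)"
      using KG[OF x(1)] KG[OF \<open>b \<in> K\<close>] a0
      by (simp add: v_def m_assoc flip: m_assoc[of "inv a0"] m_assoc[of b])
    moreover have "v \<in> K" "f v = f a0" using \<open>v \<in> V\<close> W(2) V(3) by auto
    ultimately have "f x = f b \<otimes> (f (inv a0) \<otimes> f a0)"
      using f(2) \<open>b \<in> K\<close> \<open>inv a0 \<in> K\<close> K(1) by (simp add: subgroup.m_closed)
    also have "\<dots> = f b"
      using f \<open>b \<in> K\<close> \<open>inv a0 \<in> K\<close> a0 multiplicative_on_subgroup_one[OF f K(1)]
      by (simp add: Pi_iff flip: f(2))
    finally show "y \<in> f ` B" using x(2) b(1) by blast
  qed
  then show ?thesis using B(2) finite_surj by blast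
qed

lemma (in normal) engel_comm_fibre_with_interior:
  assumes G: "compact_hausdorff_group G T" and "closedin T H"
    and g: "g \<in> carrier G" and E: "countable E" "engel_sink G g E"
  shows "\<exists>n e. subtopology T H interior_of {a \<in> H. engel_comm G a g n = e} \<noteq> {}"
proof -
  have top: "topspace T = carrier G"
    and mult: "continuous_map (prod_topology T T) T (\<lambda>(x, y). x \<otimes> y)"
    and inv: "continuous_map T T (\<lambda>x. inv x)"
    and T: "compact_space T" "Hausdorff_space T"
    using G by (simp_all add: compact_hausdorff_group_def)
  let ?S = "subtopology T H"
  let ?fibre = "\<lambda>(n, e). {a \<in> H. engel_comm G a g n = e}"
  have "compactin T H" using T(1) \<open>closedin T H\<close> by (rule closedin_compact_space)
  then have S: "compact_space ?S" "Hausdorff_space ?S" "topspace ?S = H"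
    using T(2) compactin_subset_topspace
    by (auto simp: compact_space_subtopology Hausdorff_space_subtopology)
  have "closedin ?S (?fibre p)" if pE: "p \<in> UNIV \<times> E" for p
  proof -
    obtain n e where p: "p = (n, e)" "e \<in> E" using pE by blast
    have "continuous_map ?S T (\<lambda>a. engel_comm G a g n)"
      using continuous_map_engel_comm[OF mult inv] g top by (simp add: continuous_map_from_subtopology)
    moreover have "closedin T {e}"
      using p(2) E(2) T(2) top by (auto simp: engel_sink_def intro: closedin_Hausdorff_singleton)
    moreover have "?fibre p = {a \<in> topspace ?S. engel_comm G a g n \<in> {e}}"
      using p(1) S(3) by auto
    ultimately show ?thesis
      by (simp only: closedin_continuous_map_preimage)
  qed
  moreover have "\<Union>(?fibre ` (UNIV \<times> E)) = topspace ?S"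
  proof -
    have "\<exists>n. engel_comm G a g n \<in> E" if "a \<in> H" for a
      using E(2) that subset unfolding engel_sink_def by blast
    then show ?thesis using S(3) by auto
  qed
  moreover have "topspace ?S \<noteq> {}" using S(3) subgroup.one_closed[OF is_subgroup] by blast
  ultimately show ?thesis
    using compact_Hausdorff_countable_closed_cover[OF S(1,2), of "?fibre ` (UNIV \<times> E)"] E(1)
    by fastforce
qed

lemma (in normal) finite_engel_comm_image_if_countable_sink:
  assumes G: "compact_hausdorff_group G T" and "closedin T H"
    and comm: "\<And>a b. a \<in> H \<Longrightarrow> b \<in> H \<Longrightarrow> a \<otimes> b = b \<otimes> a"
    and g: "g \<in> carrier G" and E: "countable E" "engel_sink G g E"
  shows "\<exists>n. finite ((\<lambda>a. engel_comm G a g n) ` H)"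
proof -
  have mult: "continuous_map (prod_topology T T) T (\<lambda>(x, y). x \<otimes> y)"
    and H: "compactin T H"
    using G \<open>closedin T H\<close> by (simp_all add: compact_hausdorff_group_def closedin_compact_space)
  obtain n e where "subtopology T H interior_of {a \<in> H. engel_comm G a g n = e} \<noteq> {}"
    using engel_comm_fibre_with_interior[OF G \<open>closedin T H\<close> g E] by blast
  then obtain V a0 where
    V: "openin (subtopology T H) V" "a0 \<in> V" "V \<subseteq> {a \<in> H. engel_comm G a g n = e}"
    by (meson equals0I openin_interior_of interior_of_subset)
  have "finite ((\<lambda>a. engel_comm G a g n) ` H)"
  proof (rule finite_image_if_constant_on_open[OF mult is_subgroup H _ _ V(1,2)])
    show "(\<lambda>a. engel_comm G a g n) \<in> H \<rightarrow> carrier G"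
      using g engel_comm_in subset by blast
    show "engel_comm G (a \<otimes> b) g n = engel_comm G a g n \<otimes> engel_comm G b g n"
      if "a \<in> H" "b \<in> H" for a b
      using comm that g by (rule engel_comm_mult_left)
    show "engel_comm G v g n = engel_comm G a0 g n" if "v \<in> V" for v
      using that V(2,3) by auto
  qed
  then show ?thesis ..
qed

lemma (in normal) engel_sink_engel_comm_image:
  assumes g: "g \<in> carrier G" and reach: "\<And>x. x \<in> carrier G \<Longrightarrow> \<exists>c. engel_comm G x g c \<in> H"
  shows "engel_sink G g ((\<lambda>a. engel_comm G a g n) ` H)"
  unfolding engel_sink_def
proof (intro conjI ballI)
  show "(\<lambda>a. engel_comm G a g n) ` H \<subseteq> carrier G"
    using g engel_comm_in subset by blast
  fix x assume "x \<in> carrier G"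
  then obtain c where c: "engel_comm G x g c \<in> H" using reach by blast
  have "engel_comm G x g m \<in> (\<lambda>a. engel_comm G a g n) ` H" if "m \<ge> c + n" for m
  proof
    have "m = (c + (m - c - n)) + n" using that by simp
    then show "engel_comm G x g m = engel_comm G (engel_comm G x g (c + (m - c - n))) g n"
      by (metis engel_comm_add)
    show "engel_comm G x g (c + (m - c - n)) \<in> H"
      using c g by (simp add: engel_comm_add engel_comm_in)
  qed
  then show "\<exists>n0>0. \<forall>m\<ge>n0. engel_comm G x g m \<in> (\<lambda>a. engel_comm G a g n) ` H"
    by (intro exI[of _ "Suc (c + n)"]) simp
qed

theorem lemma8p3:
  fixes G :: "('a, 'b) monoid_scheme" and T :: "'a topology" and A :: "'a set"
  assumes "compact_hausdorff_group G T"
    and "\<forall>g\<in>carrier G. \<exists>E. countable E \<and> engel_sink G g E"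
    and "A \<lhd> G" and "closedin T A"
    and "\<forall>a\<in>A. \<forall>b\<in>A. a \<otimes>\<^bsub>G\<^esub> b = b \<otimes>\<^bsub>G\<^esub> a"
    and "locally_nilpotent_group (G Mod A)"
  shows "\<forall>g\<in>carrier G. \<exists>E. finite E \<and> engel_sink G g E"
proof
  fix g assume g: "g \<in> carrier G"
  interpret normal A G by fact
  obtain E where "countable E" "engel_sink G g E" using assms(2) g by blast
  then obtain n where "finite ((\<lambda>a. engel_comm G a g n) ` A)"
    using finite_engel_comm_image_if_countable_sink[OF assms(1,4) _ g] assms(5) by blast
  moreover have "engel_sink G g ((\<lambda>a. engel_comm G a g n) ` A)"
    using g engel_comm_in_if_locally_nilpotent_Mod[OF assms(6) _ g] by (rule engel_sink_engel_comm_image)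
  ultimately show "\<exists>E. finite E \<and> engel_sink G g E" by blast
qed

end
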